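(* Let $p\ge2$ and $0\le r<k$ be integers and $\alpha>k$ real. Then $$\sum_{n=1}^\infty\frac{H_{n+\alpha-r}-H_{n+\alpha-k}}{n^p}=\sum_{i=1}^{p-1}(-1)^{i-1}\zeta(p+1-i)\Big(H_{\alpha-r}^{(i)}-H_{\alpha-k}^{(i)}\Big)+(-1)^{p-1}\sum_{j=1}^{k-r}\frac{H_{j+\alpha-k}}{(j+\alpha-k)^p},$$ and moreover $H_{\alpha-r}^{(i)}-H_{\alpha-k}^{(i)}=\sum_{j=1}^{k-r}(j+\alpha-k)^{-i}$ for every integer $i\ge1$.
   Context: Shifted harmonic numbers: for a real $\alpha$ that is not a negative integer, $H_\alpha := \sum_{k=1}^\infty\left(\frac1k-\frac1{k+\alpha}\right)$ and, for integers $m\ge 2$, $H_\alpha^{(m)} := \sum_{k=1}^\infty\left(\frac1{k^m}-\frac1{(k+\alpha)^m}\right)=\zeta(m)-\zeta(m,\alpha+1)$, where $\zeta$ is the Riemann zeta function and $\zeta(s,\alpha+1)=\sum_{n=1}^\infty (n+\alpha)^{-s}$ is the Hurwitz zeta function; $H_\alpha^{(1)}:=H_\alpha$. Empty sums are $0$. *)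

theory Defs
  imports "HOL-Analysis.Analysis"
begin

definition zeta_nat :: "nat \<Rightarrow> real" where
  "zeta_nat m = (\<Sum>n. 1 / real (Suc n) ^ m)"

text \<open>Shifted generalized harmonic number
  H_alpha^(m) = sum_{k>=1} (1/k^m - 1/(k+alpha)^m), for real alpha not a negative integer.
  The sum index k = 1,2,... is written as Suc k with k ranging over nat.\<close>
definition shifted_harm :: "nat \<Rightarrow> real \<Rightarrow> real" where
  "shifted_harm m \<alpha> = (\<Sum>k. 1 / real (Suc k) ^ m - 1 / (real (Suc k) + \<alpha>) ^ m)"

abbreviation shifted_H :: "real \<Rightarrow> real" where
  "shifted_H \<alpha> \<equiv> shifted_harm 1 \<alpha>"

end

theory Submission
  imports Defs
begin

text \<open>Shifting \<open>\<alpha>\<close> by one changes \<open>H_\<alpha>^(i)\<close> by the single term \<open>1/(\<alpha>+1)^i\<close>, because the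
  defining series telescopes; hence \<open>H_(\<beta>+d)^(i) - H_\<beta>^(i) = \<Sum>j=1..d. 1/(j+\<beta>)^i\<close>, which is
  the second claim. With \<open>\<beta> = n + \<alpha> - k\<close> it turns the \<open>n\<close>-th term of the series into
  \<open>\<Sum>j. 1/(n^p (n + a_j))\<close> with \<open>a_j = j + \<alpha> - k\<close>. The partial fraction identity
  \<open>1/(n^(q+1) (n+a)) = 1/(a n^(q+1)) - 1/(a n^q (n+a))\<close>, applied \<open>q\<close> times, sums
  \<open>\<Sum>n. 1/(n^(q+1) (n+a))\<close> to an alternating combination of \<open>\<zeta>(q+1), \<dots>, \<zeta>(2)\<close> and
  \<open>H_a / a^(q+1)\<close>; exchanging the finite sums gives the first claim.\<close>

lemma summable_zeta_nat:
  assumes "m \<ge> 2"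
  shows "summable (\<lambda>n. 1 / real (Suc n) ^ m)"
proof -
  have "summable (\<lambda>n. inverse (real (Suc n) ^ m))"
    using inverse_power_summable[OF assms] by (subst summable_Suc_iff) simp
  then show ?thesis by (simp add: divide_inverse)
qed

lemma zeta_nat_sums: "m \<ge> 2 \<Longrightarrow> (\<lambda>n. 1 / real (Suc n) ^ m) sums zeta_nat m"
  unfolding zeta_nat_def using summable_zeta_nat summable_sums by blast

lemma summable_shifted_harm:
  assumes "i \<ge> 1" "y \<ge> 0"
  shows "summable (\<lambda>k. 1 / real (Suc k) ^ i - 1 / (real (Suc k) + y) ^ i)"
proof (cases "i = 1")
  case True
  show ?thesis
  proof (rule summable_comparison_test)
    show "summable (\<lambda>k. y * (1 / real (Suc k) ^ 2))"
      by (intro summable_mult summable_zeta_nat) simp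
    have "\<bar>1 / real (Suc k) - 1 / (real (Suc k) + y)\<bar> \<le> y * (1 / real (Suc k) ^ 2)" for k
    proof -
      have "\<bar>1 / real (Suc k) - 1 / (real (Suc k) + y)\<bar> = y / (real (Suc k) * (real (Suc k) + y))"
        using assms by (simp add: field_simps)
      also have "\<dots> \<le> y / (real (Suc k) * real (Suc k))"
        using assms by (intro divide_left_mono mult_left_mono) auto
      finally show ?thesis by (simp add: power2_eq_square)
    qed
    then show "\<exists>N. \<forall>k\<ge>N. norm (1 / real (Suc k) ^ i - 1 / (real (Suc k) + y) ^ i)
                            \<le> y * (1 / real (Suc k) ^ 2)"
      using True by simp
  qed
next
  case False
  show ?thesis
  proof (rule summable_comparison_test)
    show "summable (\<lambda>k. 1 / real (Suc k) ^ i)"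
      using False assms by (intro summable_zeta_nat) simp
    have "1 / (real (Suc k) + y) ^ i \<le> 1 / real (Suc k) ^ i" for k
      using assms by (intro divide_left_mono power_mono) auto
    then show "\<exists>N. \<forall>k\<ge>N. norm (1 / real (Suc k) ^ i - 1 / (real (Suc k) + y) ^ i)
                            \<le> 1 / real (Suc k) ^ i"
      using assms by auto
  qed
qed

lemma shifted_harm_add_one:
  assumes "i \<ge> 1" "y \<ge> 0"
  shows "shifted_harm i (y + 1) - shifted_harm i y = 1 / (y + 1) ^ i"
proof -
  define g where "g k = 1 / (real k + 1 + y) ^ i" for k
  have "g \<longlonglongrightarrow> 0"
  proof (rule tendsto_sandwich[OF _ _ tendsto_const LIMSEQ_inverse_real_of_nat])
    show "\<forall>\<^sub>F n in sequentially. 0 \<le> g n"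
      using assms by (simp add: g_def)
    have "g n \<le> inverse (real (Suc n))" for n
    proof -
      have "real n + 1 \<le> (real n + 1 + y) ^ 1" using assms by simp
      also have "\<dots> \<le> (real n + 1 + y) ^ i"
        using assms by (intro power_increasing) auto
      finally show ?thesis
        unfolding g_def inverse_eq_divide using assms by (intro divide_left_mono) auto
    qed
    then show "\<forall>\<^sub>F n in sequentially. g n \<le> inverse (real (Suc n))"
      by simp
  qed
  then have telescope: "(\<lambda>k. g k - g (Suc k)) sums g 0"
    using telescope_sums'[of g 0] by simp
  have "shifted_harm i (y + 1) - shifted_harm i y
     = (\<Sum>k. (1 / real (Suc k) ^ i - 1 / (real (Suc k) + (y + 1)) ^ i)
             - (1 / real (Suc k) ^ i - 1 / (real (Suc k) + y) ^ i))"
    unfolding shifted_harm_def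
    using suminf_diff[OF summable_shifted_harm summable_shifted_harm, of i "y + 1" i y] assms
    by simp
  also have "\<dots> = (\<Sum>k. g k - g (Suc k))"
    by (rule suminf_cong) (simp add: g_def algebra_simps)
  also have "\<dots> = g 0"
    using telescope sums_unique by fastforce
  finally show ?thesis by (simp add: g_def add.commute)
qed

lemma shifted_harm_add_nat:
  assumes "i \<ge> 1" "x \<ge> 0"
  shows "shifted_harm i (x + real d) - shifted_harm i x = (\<Sum>j=1..d. 1 / (real j + x) ^ i)"
proof (induction d)
  case 0
  then show ?case by simp
next
  case (Suc d)
  have "shifted_harm i (x + real (Suc d)) - shifted_harm i (x + real d)
      = 1 / (real (Suc d) + x) ^ i"
    using shifted_harm_add_one[OF assms(1), of "x + real d"] assms by (simp add: ac_simps)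
  with Suc show ?case by simp
qed

lemma power_times_shift_partial_fraction_sums:
  assumes "a > 0"
  shows "(\<lambda>n. 1 / (real (Suc n) ^ Suc q * (real (Suc n) + a))) sums
           ((\<Sum>i<q. (-1) ^ i / a ^ Suc i * zeta_nat (Suc q - i))
            + (-1) ^ q / a ^ Suc q * shifted_H a)"
proof (induction q)
  case 0
  have "(\<lambda>k. 1 / real (Suc k) ^ 1 - 1 / (real (Suc k) + a) ^ 1) sums shifted_H a"
    unfolding shifted_harm_def using assms by (intro summable_sums summable_shifted_harm) auto
  from sums_mult[OF this, of "1 / a"] show ?case
    using assms by (simp add: field_simps)
next
  case (Suc q)
  have "(\<lambda>n. 1 / a * (1 / real (Suc n) ^ Suc (Suc q))
             - 1 / a * (1 / (real (Suc n) ^ Suc q * (real (Suc n) + a))))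
        sums (1 / a * zeta_nat (Suc (Suc q))
              - 1 / a * ((\<Sum>i<q. (-1) ^ i / a ^ Suc i * zeta_nat (Suc q - i))
                         + (-1) ^ q / a ^ Suc q * shifted_H a))"
    by (intro sums_diff sums_mult Suc.IH zeta_nat_sums) simp
  moreover have "1 / a * (1 / t ^ Suc (Suc q)) - 1 / a * (1 / (t ^ Suc q * (t + a)))
               = 1 / (t ^ Suc (Suc q) * (t + a))" if "t > 0" for t :: real
  proof -
    have "1 / a * (1 / (t * s)) - 1 / a * (1 / (s * (t + a))) = 1 / (t * s * (t + a))"
      if "s > 0" for s :: real
      using that \<open>t > 0\<close> assms by (simp add: divide_simps)
    from this[of "t ^ Suc q"] \<open>t > 0\<close> show ?thesis by simp
  qed
  moreover have "1 / a * zeta_nat (Suc (Suc q))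
                 - 1 / a * ((\<Sum>i<q. (-1) ^ i / a ^ Suc i * zeta_nat (Suc q - i))
                            + (-1) ^ q / a ^ Suc q * shifted_H a)
               = (\<Sum>i<Suc q. (-1) ^ i / a ^ Suc i * zeta_nat (Suc (Suc q) - i))
                 + (-1) ^ Suc q / a ^ Suc (Suc q) * shifted_H a"
    by (subst sum.lessThan_Suc_shift)
      (simp add: sum_distrib_left sum_negf field_simps sum_divide_distrib add_divide_distrib)
  ultimately show ?case
    by simp
qed

lemma shifted_H_diff_over_power_sums:
  assumes "\<beta> \<ge> 0"
  shows "(\<lambda>n. (shifted_H (real (Suc n) + \<beta> + real d) - shifted_H (real (Suc n) + \<beta>))
              / real (Suc n) ^ Suc q)
         sums ((\<Sum>i<q. (-1) ^ i * zeta_nat (Suc q - i) * (\<Sum>j=1..d. 1 / (real j + \<beta>) ^ Suc i))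
               + (-1) ^ q * (\<Sum>j=1..d. shifted_H (real j + \<beta>) / (real j + \<beta>) ^ Suc q))"
proof -
  have term_eq: "(shifted_H (real (Suc n) + \<beta> + real d) - shifted_H (real (Suc n) + \<beta>))
                   / real (Suc n) ^ Suc q
                 = (\<Sum>j=1..d. 1 / (real (Suc n) ^ Suc q * (real (Suc n) + (real j + \<beta>))))" for n
    using shifted_harm_add_nat[of 1 "real (Suc n) + \<beta>" d] assms
    by (simp add: sum_divide_distrib algebra_simps)
  have "(\<lambda>n. \<Sum>j=1..d. 1 / (real (Suc n) ^ Suc q * (real (Suc n) + (real j + \<beta>))))
        sums (\<Sum>j=1..d. (\<Sum>i<q. (-1) ^ i / (real j + \<beta>) ^ Suc i * zeta_nat (Suc q - i))
                        + (-1) ^ q / (real j + \<beta>) ^ Suc q * shifted_H (real j + \<beta>))"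
    using assms by (intro sums_sum power_times_shift_partial_fraction_sums) simp
  also have "(\<Sum>j=1..d. (\<Sum>i<q. (-1) ^ i / (real j + \<beta>) ^ Suc i * zeta_nat (Suc q - i))
                        + (-1) ^ q / (real j + \<beta>) ^ Suc q * shifted_H (real j + \<beta>))
           = (\<Sum>i<q. (-1) ^ i * zeta_nat (Suc q - i) * (\<Sum>j=1..d. 1 / (real j + \<beta>) ^ Suc i))
             + (-1) ^ q * (\<Sum>j=1..d. shifted_H (real j + \<beta>) / (real j + \<beta>) ^ Suc q)"
    by (simp add: sum.distrib sum_distrib_left) (rule sum.swap)
  finally show ?thesis
    unfolding term_eq .
qed

theorem mainTheorem9:
  fixes p r k :: nat and \<alpha> :: real
  assumes "p \<ge> 2" and "r < k" and "\<alpha> > real k"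
  shows "(\<lambda>n. (shifted_H (real (Suc n) + \<alpha> - real r) - shifted_H (real (Suc n) + \<alpha> - real k))
              / real (Suc n) ^ p)
         sums ((\<Sum>i=1..p-1. (-1) ^ (i - 1) * zeta_nat (p + 1 - i)
                   * (shifted_harm i (\<alpha> - real r) - shifted_harm i (\<alpha> - real k)))
               + (-1) ^ (p - 1) * (\<Sum>j=1..k-r. shifted_H (real j + \<alpha> - real k)
                   / (real j + \<alpha> - real k) ^ p))
       \<and> (\<forall>i::nat. i \<ge> 1 \<longrightarrow>
            shifted_harm i (\<alpha> - real r) - shifted_harm i (\<alpha> - real k)
              = (\<Sum>j=1..k-r. 1 / (real j + \<alpha> - real k) ^ i))"
proof -
  define \<beta> where "\<beta> = \<alpha> - real k"
  obtain q where p: "p = Suc q" using assms(1) by (cases p) auto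
  have \<beta>: "\<beta> \<ge> 0" "\<alpha> - real k = \<beta>" "\<alpha> - real r = \<beta> + real (k - r)"
    "\<And>x. x + \<alpha> - real k = x + \<beta>" "\<And>x. x + \<alpha> - real r = x + \<beta> + real (k - r)"
    using assms by (simp_all add: \<beta>_def of_nat_diff)
  have harm_diff: "shifted_harm i (\<alpha> - real r) - shifted_harm i (\<alpha> - real k)
                   = (\<Sum>j=1..k-r. 1 / (real j + \<alpha> - real k) ^ i)" if "i \<ge> 1" for i
    using shifted_harm_add_nat[OF that \<beta>(1)] by (simp only: \<beta>(2-4))
  have "(\<Sum>i=1..p-1. (-1) ^ (i - 1) * zeta_nat (p + 1 - i)
                   * (shifted_harm i (\<alpha> - real r) - shifted_harm i (\<alpha> - real k)))
        = (\<Sum>i<q. (-1) ^ i * zeta_nat (Suc q - i) * (\<Sum>j=1..k-r. 1 / (real j + \<beta>) ^ Suc i))"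
    unfolding p by (simp add: sum.atLeast1_atMost_eq harm_diff \<beta>(4) del: power_Suc)
  with shifted_H_diff_over_power_sums[OF \<beta>(1), of "k - r" q] harm_diff show ?thesis
    unfolding p \<beta>(4,5) by simp
qed

end
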